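(* If $R$ is a semiquasitriangular structure for a Hopf algebra $H$ (with bijective antipode), then so is $\tau(R^{-1})=R^{-(2)}\otimes R^{-(1)}$, where $\tau:H\otimes H\to H\otimes H$ is the flip $\tau(h\otimes l)=l\otimes h$.
   Context: All vector spaces are over a field $k$, $\otimes=\otimes_k$. For a Hopf algebra $H$ with comultiplication $\Delta$, counit $\epsilon$, antipode $S$, we use Sweedler notation $\Delta(h)=h_1\otimes h_2$, etc. $\operatorname{Z}(H)$ is the centre of $H$. For $R\in H\otimes H$ we write $R=R^{(1)}\otimes R^{(2)}$ (summation understood); $R'^{(1)}\otimes R'^{(2)}$ denotes another copy of $R$; $R^{-1}=R^{-(1)}\otimes R^{-(2)}$. Definition (semiquasitriangular Hopf algebra): a pair $(H,R)$ with $H$ a Hopf algebra with bijective antipode and $R\in H\otimes H$ invertible such that (1) $R^{(1)}_1\otimes R^{(1)}_2\otimes R^{(2)} = R^{(1)}\otimes R'^{(1)}\otimes R^{(2)}R'^{(2)}$; (2) $R^{(1)}\otimes R^{(2)}_1\otimes R^{(2)}_2 = R^{(1)}R'^{(1)}\otimes R'^{(2)}\otimes R^{(2)}$; (3) $R^{(1)}\otimes R^{(2)}_2R'^{(1)}\otimes R^{(2)}_1R'^{(2)} = R^{(1)}\otimes R'^{(1)}R^{(2)}_1\otimes R'^{(2)}R^{(2)}_2$; (4) $R^{(1)}_2R'^{(1)}\otimes R^{(1)}_1R'^{(2)}\otimes R^{(2)} = R'^{(1)}R^{(1)}_1\otimes R'^{(2)}R^{(1)}_2\otimes R^{(2)}$;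 (5) $\nu(h):=R^{(2)}h_2R'^{(2)}\otimes S(h_1)S(R^{(1)})h_3R'^{(1)}\in H\otimes\operatorname{Z}(H)$ for all $h\in H$; (6) $\nu(h)=R^{(1)}h_2R'^{(1)}\otimes S(R'^{(2)})S(h_1)R^{(2)}h_3$ for all $h\in H$. Then $R$ is called a semiquasitriangular structure on $H$. *)

theory Defs
  imports Main "HOL-Library.Poly_Mapping"
begin

(* Every vector space over a field k has a basis (indexed by some set), so it is
isomorphic to the space of finitely supported functions  'i \<Rightarrow>\<^sub>0 'k .
We model the Hopf algebra H as  'i \<Rightarrow>\<^sub>0 'k , H\<otimes>H as  ('i \<times> 'i) \<Rightarrow>\<^sub>0 'k  and
H\<otimes>H\<otimes>H as  ('i \<times> 'i \<times> 'i) \<Rightarrow>\<^sub>0 'k  (bases of tensor products are products of bases).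
Linear and bilinear maps are determined by their values on basis vectors. *)

definition smult :: "'k::semiring_0 \<Rightarrow> ('a \<Rightarrow>\<^sub>0 'k) \<Rightarrow> ('a \<Rightarrow>\<^sub>0 'k)" where
  "smult c v = Poly_Mapping.map (\<lambda>x. c * x) v"

definition bvec :: "'a \<Rightarrow> ('a \<Rightarrow>\<^sub>0 'k::{zero,one})" where
  "bvec a = Poly_Mapping.single a 1"

definition lext :: "('a \<Rightarrow> ('b \<Rightarrow>\<^sub>0 'k::semiring_0)) \<Rightarrow> ('a \<Rightarrow>\<^sub>0 'k) \<Rightarrow> ('b \<Rightarrow>\<^sub>0 'k)" where
  "lext f v = (\<Sum>a\<in>Poly_Mapping.keys v. smult (Poly_Mapping.lookup v a) (f a))"

definition lfun :: "('a \<Rightarrow> 'k::semiring_0) \<Rightarrow> ('a \<Rightarrow>\<^sub>0 'k) \<Rightarrow> 'k" where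
  "lfun f v = (\<Sum>a\<in>Poly_Mapping.keys v. Poly_Mapping.lookup v a * f a)"

definition bext :: "('a \<Rightarrow> 'b \<Rightarrow> ('c \<Rightarrow>\<^sub>0 'k::semiring_0)) \<Rightarrow> ('a \<Rightarrow>\<^sub>0 'k) \<Rightarrow> ('b \<Rightarrow>\<^sub>0 'k) \<Rightarrow> ('c \<Rightarrow>\<^sub>0 'k)" where
  "bext f u v = lext (\<lambda>a. lext (f a) v) u"

definition tens :: "('a \<Rightarrow>\<^sub>0 'k::semiring_1) \<Rightarrow> ('b \<Rightarrow>\<^sub>0 'k) \<Rightarrow> ('a \<times> 'b \<Rightarrow>\<^sub>0 'k)" where
  "tens u v = bext (\<lambda>a b. bvec (a, b)) u v"

definition tens3 :: "('a \<Rightarrow>\<^sub>0 'k::semiring_1) \<Rightarrow> ('b \<Rightarrow>\<^sub>0 'k) \<Rightarrow> ('c \<Rightarrow>\<^sub>0 'k) \<Rightarrow> ('a \<times> 'b \<times> 'c \<Rightarrow>\<^sub>0 'k)" where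
  "tens3 x y z = tens x (tens y z)"

definition flip :: "('a \<times> 'b \<Rightarrow>\<^sub>0 'k::semiring_1) \<Rightarrow> ('b \<times> 'a \<Rightarrow>\<^sub>0 'k)" where
  "flip t = lext (\<lambda>(a, b). bvec (b, a)) t"

record (overloaded) ('i, 'k::zero) hopf_data =
  hmul :: "'i \<Rightarrow> 'i \<Rightarrow> ('i \<Rightarrow>\<^sub>0 'k)"
  hunit :: "'i \<Rightarrow>\<^sub>0 'k"
  hcomul :: "'i \<Rightarrow> ('i \<times> 'i \<Rightarrow>\<^sub>0 'k)"
  hcounit :: "'i \<Rightarrow> 'k"
  hantipode :: "'i \<Rightarrow> ('i \<Rightarrow>\<^sub>0 'k)"

context
  fixes A :: "('i, 'k::field) hopf_data"
begin

definition mul :: "('i \<Rightarrow>\<^sub>0 'k) \<Rightarrow> ('i \<Rightarrow>\<^sub>0 'k) \<Rightarrow> ('i \<Rightarrow>\<^sub>0 'k)" where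
  "mul x y = bext (hmul A) x y"

definition one :: "'i \<Rightarrow>\<^sub>0 'k" where
  "one = hunit A"

definition comul :: "('i \<Rightarrow>\<^sub>0 'k) \<Rightarrow> ('i \<times> 'i \<Rightarrow>\<^sub>0 'k)" where
  "comul x = lext (hcomul A) x"

definition counit :: "('i \<Rightarrow>\<^sub>0 'k) \<Rightarrow> 'k" where
  "counit x = lfun (hcounit A) x"

definition antipode :: "('i \<Rightarrow>\<^sub>0 'k) \<Rightarrow> ('i \<Rightarrow>\<^sub>0 'k)" where
  "antipode x = lext (hantipode A) x"

definition mul2 :: "('i \<times> 'i \<Rightarrow>\<^sub>0 'k) \<Rightarrow> ('i \<times> 'i \<Rightarrow>\<^sub>0 'k) \<Rightarrow> ('i \<times> 'i \<Rightarrow>\<^sub>0 'k)" where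
  "mul2 = bext (\<lambda>(a, b) (c, d). tens (hmul A a c) (hmul A b d))"

definition one2 :: "'i \<times> 'i \<Rightarrow>\<^sub>0 'k" where
  "one2 = tens one one"

definition mul3 :: "('i \<times> 'i \<times> 'i \<Rightarrow>\<^sub>0 'k) \<Rightarrow> ('i \<times> 'i \<times> 'i \<Rightarrow>\<^sub>0 'k) \<Rightarrow> ('i \<times> 'i \<times> 'i \<Rightarrow>\<^sub>0 'k)" where
  "mul3 = bext (\<lambda>(a, b, c) (a', b', c'). tens3 (hmul A a a') (hmul A b b') (hmul A c c'))"

definition comul_left :: "('i \<times> 'i \<Rightarrow>\<^sub>0 'k) \<Rightarrow> ('i \<times> 'i \<times> 'i \<Rightarrow>\<^sub>0 'k)" where
  "comul_left t = lext (\<lambda>(a, b). lext (\<lambda>(c, d). tens3 (bvec c) (bvec d) (bvec b)) (comul (bvec a))) t"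

definition comul_right :: "('i \<times> 'i \<Rightarrow>\<^sub>0 'k) \<Rightarrow> ('i \<times> 'i \<times> 'i \<Rightarrow>\<^sub>0 'k)" where
  "comul_right t = lext (\<lambda>(a, b). lext (\<lambda>(c, d). tens3 (bvec a) (bvec c) (bvec d)) (comul (bvec b))) t"

definition comulop_left :: "('i \<times> 'i \<Rightarrow>\<^sub>0 'k) \<Rightarrow> ('i \<times> 'i \<times> 'i \<Rightarrow>\<^sub>0 'k)" where
  "comulop_left t = lext (\<lambda>(a, b). lext (\<lambda>(c, d). tens3 (bvec d) (bvec c) (bvec b)) (comul (bvec a))) t"

definition comulop_right :: "('i \<times> 'i \<Rightarrow>\<^sub>0 'k) \<Rightarrow> ('i \<times> 'i \<times> 'i \<Rightarrow>\<^sub>0 'k)" where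
  "comulop_right t = lext (\<lambda>(a, b). lext (\<lambda>(c, d). tens3 (bvec a) (bvec d) (bvec c)) (comul (bvec b))) t"

definition comul3 :: "('i \<Rightarrow>\<^sub>0 'k) \<Rightarrow> ('i \<times> 'i \<times> 'i \<Rightarrow>\<^sub>0 'k)" where
  "comul3 h = comul_left (comul h)"

definition leg12 :: "('i \<times> 'i \<Rightarrow>\<^sub>0 'k) \<Rightarrow> ('i \<times> 'i \<times> 'i \<Rightarrow>\<^sub>0 'k)" where
  "leg12 t = lext (\<lambda>(a, b). tens3 (bvec a) (bvec b) one) t"

definition leg13 :: "('i \<times> 'i \<Rightarrow>\<^sub>0 'k) \<Rightarrow> ('i \<times> 'i \<times> 'i \<Rightarrow>\<^sub>0 'k)" where
  "leg13 t = lext (\<lambda>(a, b). tens3 (bvec a) one (bvec b)) t"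

definition leg23 :: "('i \<times> 'i \<Rightarrow>\<^sub>0 'k) \<Rightarrow> ('i \<times> 'i \<times> 'i \<Rightarrow>\<^sub>0 'k)" where
  "leg23 t = lext (\<lambda>(a, b). tens3 one (bvec a) (bvec b)) t"

definition hopf_algebra :: bool where
  "hopf_algebra \<longleftrightarrow>
     (\<forall>x y z. mul (mul x y) z = mul x (mul y z)) \<and>
     (\<forall>x. mul one x = x \<and> mul x one = x) \<and>
     (\<forall>x. comul_left (comul x) = comul_right (comul x)) \<and>
     (\<forall>x. lext (\<lambda>(a, b). smult (hcounit A a) (bvec b)) (comul x) = x) \<and>
     (\<forall>x. lext (\<lambda>(a, b). smult (hcounit A b) (bvec a)) (comul x) = x) \<and>
     (\<forall>x y. comul (mul x y) = mul2 (comul x) (comul y)) \<and>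
     comul one = one2 \<and>
     (\<forall>x y. counit (mul x y) = counit x * counit y) \<and>
     counit one = 1 \<and>
     (\<forall>x. lext (\<lambda>(a, b). mul (antipode (bvec a)) (bvec b)) (comul x) = smult (counit x) one) \<and>
     (\<forall>x. lext (\<lambda>(a, b). mul (bvec a) (antipode (bvec b))) (comul x) = smult (counit x) one) \<and>
     bij antipode"

(* Centre Z(H) and the subspace H \<otimes> Z(H) of H \<otimes> H (spanned by the elementary
  tensors h \<otimes> z with z central; scalars are absorbed into h). *)
definition central :: "('i \<Rightarrow>\<^sub>0 'k) \<Rightarrow> bool" where
  "central z \<longleftrightarrow> (\<forall>x. mul z x = mul x z)"

inductive_set H_tensor_center :: "('i \<times> 'i \<Rightarrow>\<^sub>0 'k) set" where
  zero: "0 \<in> H_tensor_center"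
| add: "t \<in> H_tensor_center \<Longrightarrow> central z \<Longrightarrow> t + tens h z \<in> H_tensor_center"

(* 
  \<nu>(h) = R\<^sup>(\<^sup>2\<^sup>) h\<^sub>2 R'\<^sup>(\<^sup>2\<^sup>) \<otimes> S(h\<^sub>1) S(R\<^sup>(\<^sup>1\<^sup>)) h\<^sub>3 R'\<^sup>(\<^sup>1\<^sup>)   (condition (5)) and
  the right-hand side of condition (6):
  R\<^sup>(\<^sup>1\<^sup>) h\<^sub>2 R'\<^sup>(\<^sup>1\<^sup>) \<otimes> S(R'\<^sup>(\<^sup>2\<^sup>)) S(h\<^sub>1) R\<^sup>(\<^sup>2\<^sup>) h\<^sub>3 .
  Here R = \<Sum> R\<^sub>(\<^sub>a\<^sub>,\<^sub>b\<^sub>) a \<otimes> b over basis pairs (a,b), R' a second copy (a',b'). *)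
definition nu :: "('i \<times> 'i \<Rightarrow>\<^sub>0 'k) \<Rightarrow> ('i \<Rightarrow>\<^sub>0 'k) \<Rightarrow> ('i \<times> 'i \<Rightarrow>\<^sub>0 'k)" where
  "nu R h = lext (\<lambda>(a, b). lext (\<lambda>(a', b'). lext (\<lambda>(c1, c2, c3).
      tens (mul (mul (bvec b) (bvec c2)) (bvec b'))
           (mul (mul (mul (antipode (bvec c1)) (antipode (bvec a))) (bvec c3)) (bvec a')))
    (comul3 h)) R) R"

definition nu6 :: "('i \<times> 'i \<Rightarrow>\<^sub>0 'k) \<Rightarrow> ('i \<Rightarrow>\<^sub>0 'k) \<Rightarrow> ('i \<times> 'i \<Rightarrow>\<^sub>0 'k)" where
  "nu6 R h = lext (\<lambda>(a, b). lext (\<lambda>(a', b'). lext (\<lambda>(c1, c2, c3).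
      tens (mul (mul (bvec a) (bvec c2)) (bvec a'))
           (mul (mul (mul (antipode (bvec b')) (antipode (bvec c1))) (bvec b)) (bvec c3)))
    (comul3 h)) R) R"

definition invertible2 :: "('i \<times> 'i \<Rightarrow>\<^sub>0 'k) \<Rightarrow> bool" where
  "invertible2 R \<longleftrightarrow> (\<exists>R'. mul2 R R' = one2 \<and> mul2 R' R = one2)"

definition semiquasitriangular :: "('i \<times> 'i \<Rightarrow>\<^sub>0 'k) \<Rightarrow> bool" where
  "semiquasitriangular R \<longleftrightarrow>
     hopf_algebra \<and> invertible2 R \<and>
     comul_left R = mul3 (leg13 R) (leg23 R) \<and>
     comul_right R = mul3 (leg13 R) (leg12 R) \<and>
     mul3 (comulop_right R) (leg23 R) = mul3 (leg23 R) (comul_right R) \<and>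
     mul3 (comulop_left R) (leg12 R) = mul3 (leg12 R) (comul_left R) \<and>
     (\<forall>h. nu R h \<in> H_tensor_center) \<and>
     (\<forall>h. nu R h = nu6 R h)"

end

end

theory Submission
  imports Defs
begin

text \<open>
  Write \<open>P = R\<^sup>-\<^sup>1\<close> and \<open>Q = \<tau>(P)\<close>. Applying \<open>\<epsilon>\<close> and \<open>m(S \<otimes> id)\<close> to the first two legs of
  condition (1) gives \<open>(\<epsilon> \<otimes> id)R = 1\<close> and \<open>(S \<otimes> id)R = P\<close>; likewise condition (2) gives
  \<open>(id \<otimes> \<epsilon>)R = 1\<close> and shows that \<open>(id \<otimes> S)R\<close> is a two-sided inverse of \<open>R\<close> in \<open>H \<otimes> H\<^sup>o\<^sup>p\<close>.
  Inverting (1) and (2) yields \<open>\<Delta>\<close>-formulas for \<open>P\<close> which after the flip are exactly (1) and (2)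
  for \<open>Q\<close>, so the same facts hold for \<open>Q\<close>; in particular \<open>(id \<otimes> S)P = R\<close>. Given (1) and (2),
  conditions (3) and (4) are each equivalent to the Yang--Baxter equation, which passes to inverses
  and is invariant under reversing the legs. Finally, with \<open>T\<^sub>h(x \<otimes> y) = x h\<^sub>2 \<otimes> S(h\<^sub>1) y h\<^sub>3\<close>,
  \<open>\<nu>(h) = T\<^sub>h(\<tau>(S \<otimes> id)R) \<tau>(R)\<close> and the right-hand side of (6) is \<open>T\<^sub>h(R) (id \<otimes> S)R\<close> computed
  in \<open>H \<otimes> H\<^sup>o\<^sup>p\<close>. Since \<open>\<nu>(h) \<in> H \<otimes> Z(H)\<close>, where the products of \<open>H \<otimes> H\<close> and \<open>H \<otimes> H\<^sup>o\<^sup>p\<close>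
  agree, these factorisations give \<open>\<nu>\<^sub>Q(h) = \<nu>\<^sub>R(h)\<close> and \<open>\<nu>6\<^sub>Q(h) = \<nu>\<^sub>R(h)\<close>.

  All maps are defined on basis vectors and extended (multi)linearly, so every identity between
  them is proved by checking it on basis vectors.
\<close>

section \<open>Linear maps between spaces of finitely supported functions\<close>

lemma lookup_smult [simp]: "Poly_Mapping.lookup (smult c v) a = c * Poly_Mapping.lookup v a"
  unfolding smult_def by (simp add: Poly_Mapping.map.rep_eq when_def)

lemma lookup_bvec: "Poly_Mapping.lookup (bvec a) b = (if a = b then 1 else 0)"
  unfolding bvec_def by (simp add: lookup_single when_def)

lemma smult_add_right: "smult c (u + v) = smult c u + smult c v"
  by (rule poly_mapping_eqI) (simp add: lookup_add distrib_left)

lemma smult_add_left: "smult (c + d) u = smult c u + smult d u"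
  by (rule poly_mapping_eqI) (simp add: lookup_add distrib_right)

lemma smult_zero_right [simp]: "smult c 0 = 0"
  by (rule poly_mapping_eqI) simp

lemma smult_zero_left [simp]: "smult 0 u = (0 :: 'a \<Rightarrow>\<^sub>0 'k::semiring_0)"
  by (rule poly_mapping_eqI) simp

lemma smult_one [simp]: "smult 1 u = (u :: 'a \<Rightarrow>\<^sub>0 'k::semiring_1)"
  by (rule poly_mapping_eqI) simp

lemma smult_smult [simp]: "smult c (smult d u) = smult (c * d) (u :: 'a \<Rightarrow>\<^sub>0 'k::semiring_0)"
  by (rule poly_mapping_eqI) (simp add: mult.assoc)

lemma smult_sum: "smult c (sum f A) = (\<Sum>a\<in>A. smult c (f a))"
  by (rule poly_mapping_eqI) (simp add: lookup_sum sum_distrib_left)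

lemma lext_superset:
  assumes "finite S" "Poly_Mapping.keys v \<subseteq> S"
  shows "lext f v = (\<Sum>a\<in>S. smult (Poly_Mapping.lookup v a) (f a))"
proof -
  have "(\<Sum>a\<in>S. smult (Poly_Mapping.lookup v a) (f a)) =
        (\<Sum>a\<in>Poly_Mapping.keys v. smult (Poly_Mapping.lookup v a) (f a))"
    by (rule sum.mono_neutral_right[OF assms]) (auto simp: in_keys_iff)
  then show ?thesis by (simp add: lext_def)
qed

lemma lext_add: "lext f (u + v) = lext f u + lext f v"
proof -
  let ?S = "Poly_Mapping.keys u \<union> Poly_Mapping.keys v"
  have S: "finite ?S" by simp
  have "lext f (u + v) = (\<Sum>a\<in>?S. smult (Poly_Mapping.lookup (u + v) a) (f a))"
    by (rule lext_superset[OF S keys_add])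
  also have "\<dots> = (\<Sum>a\<in>?S. smult (Poly_Mapping.lookup u a) (f a)) +
                  (\<Sum>a\<in>?S. smult (Poly_Mapping.lookup v a) (f a))"
    by (simp add: lookup_add smult_add_left sum.distrib)
  also have "\<dots> = lext f u + lext f v"
    using lext_superset[OF S, of u f] lext_superset[OF S, of v f] by simp
  finally show ?thesis .
qed

lemma lext_smult: "lext f (smult c v) = smult c (lext f (v :: 'a \<Rightarrow>\<^sub>0 'k::field))"
proof -
  have "lext f (smult c v) = (\<Sum>a\<in>Poly_Mapping.keys v. smult (Poly_Mapping.lookup (smult c v) a) (f a))"
    by (rule lext_superset) (auto simp: in_keys_iff)
  then show ?thesis by (simp add: lext_def smult_sum)
qed

lemma lext_zero [simp]: "lext f 0 = 0"
  by (simp add: lext_def)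

lemma lext_bvec [simp]: "lext f (bvec a) = (f a :: 'b \<Rightarrow>\<^sub>0 'k::field)"
  by (simp add: lext_def bvec_def)

lemma lext_fun_add: "lext (\<lambda>a. f a + g a) v = lext f v + lext g v"
  by (simp add: lext_def smult_add_right sum.distrib)

lemma lext_fun_smult: "lext (\<lambda>a. smult c (f a)) v = smult c (lext f (v :: 'a \<Rightarrow>\<^sub>0 'k::field))"
  by (simp add: lext_def smult_sum mult.commute)

lemma lext_bvec_id [simp]: "lext bvec v = (v :: 'a \<Rightarrow>\<^sub>0 'k::field)"
proof (rule poly_mapping_eqI)
  fix b
  have "Poly_Mapping.lookup (lext bvec v) b =
        (\<Sum>a\<in>Poly_Mapping.keys v. if a = b then Poly_Mapping.lookup v a else 0)"
    unfolding lext_def lookup_sum lookup_smult lookup_bvec by (rule sum.cong) auto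
  also have "\<dots> = Poly_Mapping.lookup v b"
    by (simp add: sum.delta' in_keys_iff)
  finally show "Poly_Mapping.lookup (lext bvec v) b = Poly_Mapping.lookup v b" .
qed

definition pm_linear :: "(('a \<Rightarrow>\<^sub>0 'k::field) \<Rightarrow> ('b \<Rightarrow>\<^sub>0 'k)) \<Rightarrow> bool" where
  "pm_linear L \<longleftrightarrow> (\<forall>u v. L (u + v) = L u + L v) \<and> (\<forall>c u. L (smult c u) = smult c (L u))"

lemma pm_linear_addD: "pm_linear L \<Longrightarrow> L (u + v) = L u + L v"
  unfolding pm_linear_def by blast

lemma pm_linear_smultD: "pm_linear L \<Longrightarrow> L (smult c u) = smult c (L u)"
  unfolding pm_linear_def by blast

lemma pm_linear_zero: "pm_linear L \<Longrightarrow> L 0 = 0"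
  using pm_linear_addD[of L 0 0] by simp

lemma pm_linear_sum: "pm_linear L \<Longrightarrow> L (sum g A) = (\<Sum>i\<in>A. L (g i))"
  by (induction A rule: infinite_finite_induct) (simp_all add: pm_linear_zero pm_linear_addD)

lemma pm_linear_lext: "pm_linear L \<Longrightarrow> L (lext f v) = lext (\<lambda>a. L (f a)) v"
  unfolding lext_def by (simp add: pm_linear_sum pm_linear_smultD)

lemma pm_linear_eqI:
  assumes "pm_linear L1" "pm_linear L2" "\<And>a. L1 (bvec a) = L2 (bvec a)"
  shows "L1 v = L2 v"
  using pm_linear_lext[OF assms(1), of bvec v] pm_linear_lext[OF assms(2), of bvec v]
  by (simp add: assms(3))

lemma pm_bilinear_eqI:
  assumes "\<And>y. pm_linear (\<lambda>x. F x y)" "\<And>y. pm_linear (\<lambda>x. G x y)"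
    "\<And>x. pm_linear (\<lambda>y. F x y)" "\<And>x. pm_linear (\<lambda>y. G x y)"
    "\<And>a b. F (bvec a) (bvec b) = G (bvec a) (bvec b)"
  shows "F x y = G x y"
proof -
  have basis: "F (bvec a) y = G (bvec a) y" for a
    by (rule pm_linear_eqI[of "\<lambda>y. F (bvec a) y" "\<lambda>y. G (bvec a) y"]) (use assms in auto)
  show ?thesis by (rule pm_linear_eqI[of "\<lambda>x. F x y" "\<lambda>x. G x y"]) (use assms basis in auto)
qed

lemma pm_trilinear_eqI:
  assumes "\<And>y z. pm_linear (\<lambda>x. F x y z)" "\<And>y z. pm_linear (\<lambda>x. G x y z)"
    "\<And>x z. pm_linear (\<lambda>y. F x y z)" "\<And>x z. pm_linear (\<lambda>y. G x y z)"
    "\<And>x y. pm_linear (\<lambda>z. F x y z)" "\<And>x y. pm_linear (\<lambda>z. G x y z)"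
    "\<And>a b c. F (bvec a) (bvec b) (bvec c) = G (bvec a) (bvec b) (bvec c)"
  shows "F x y z = G x y z"
proof -
  have basis: "F (bvec a) y z = G (bvec a) y z" for a
    by (rule pm_bilinear_eqI[of "\<lambda>y z. F (bvec a) y z" "\<lambda>y z. G (bvec a) y z"]) (use assms in auto)
  show ?thesis by (rule pm_linear_eqI[of "\<lambda>x. F x y z" "\<lambda>x. G x y z"]) (use assms basis in auto)
qed

lemma pm_quadrilinear_eqI:
  assumes "\<And>y z w. pm_linear (\<lambda>x. F x y z w)" "\<And>y z w. pm_linear (\<lambda>x. G x y z w)"
    "\<And>x z w. pm_linear (\<lambda>y. F x y z w)" "\<And>x z w. pm_linear (\<lambda>y. G x y z w)"
    "\<And>x y w. pm_linear (\<lambda>z. F x y z w)" "\<And>x y w. pm_linear (\<lambda>z. G x y z w)"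
    "\<And>x y z. pm_linear (\<lambda>w. F x y z w)" "\<And>x y z. pm_linear (\<lambda>w. G x y z w)"
    "\<And>a b c d. F (bvec a) (bvec b) (bvec c) (bvec d) = G (bvec a) (bvec b) (bvec c) (bvec d)"
  shows "F x y z w = G x y z w"
proof -
  have basis: "F (bvec a) y z w = G (bvec a) y z w" for a
    by (rule pm_trilinear_eqI[of "\<lambda>y z w. F (bvec a) y z w" "\<lambda>y z w. G (bvec a) y z w"])
       (use assms in auto)
  show ?thesis
    by (rule pm_linear_eqI[of "\<lambda>x. F x y z w" "\<lambda>x. G x y z w"]) (use assms basis in auto)
qed

named_theorems pm_linear_intros

lemma pm_linear_id [pm_linear_intros]: "pm_linear (\<lambda>x. x)"
  by (simp add: pm_linear_def)

lemma pm_linear_lext_comp [pm_linear_intros]: "pm_linear L \<Longrightarrow> pm_linear (\<lambda>x. lext f (L x))"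
  by (simp add: pm_linear_def lext_add lext_smult)

lemma pm_linear_lext_fun:
  "(\<And>a. pm_linear (F a)) \<Longrightarrow> pm_linear L \<Longrightarrow> pm_linear (\<lambda>x. lext (\<lambda>a. F a (L x)) v)"
  by (simp add: pm_linear_def lext_fun_add lext_fun_smult)

lemma pm_linear_bext1 [pm_linear_intros]: "pm_linear L \<Longrightarrow> pm_linear (\<lambda>x. bext f (L x) v)"
  unfolding bext_def by (rule pm_linear_lext_comp)

lemma pm_linear_bext2 [pm_linear_intros]: "pm_linear L \<Longrightarrow> pm_linear (\<lambda>x. bext f u (L x))"
  unfolding bext_def by (intro pm_linear_lext_fun pm_linear_lext_comp pm_linear_id)

lemma pm_linear_tens1 [pm_linear_intros]: "pm_linear L \<Longrightarrow> pm_linear (\<lambda>x. tens (L x) v)"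
  unfolding tens_def by (rule pm_linear_bext1)

lemma pm_linear_tens2 [pm_linear_intros]: "pm_linear L \<Longrightarrow> pm_linear (\<lambda>x. tens u (L x))"
  unfolding tens_def by (rule pm_linear_bext2)

lemma pm_linear_tens3_1 [pm_linear_intros]: "pm_linear L \<Longrightarrow> pm_linear (\<lambda>x. tens3 (L x) v w)"
  unfolding tens3_def by (rule pm_linear_tens1)

lemma pm_linear_tens3_2 [pm_linear_intros]: "pm_linear L \<Longrightarrow> pm_linear (\<lambda>x. tens3 u (L x) w)"
  unfolding tens3_def by (intro pm_linear_tens1 pm_linear_tens2)

lemma pm_linear_tens3_3 [pm_linear_intros]: "pm_linear L \<Longrightarrow> pm_linear (\<lambda>x. tens3 u v (L x))"
  unfolding tens3_def by (intro pm_linear_tens1 pm_linear_tens2)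

lemma pm_linear_smult [pm_linear_intros]: "pm_linear L \<Longrightarrow> pm_linear (\<lambda>x. smult c (L x))"
  by (simp add: pm_linear_def smult_add_right mult.commute)

lemma pm_linear_flip [pm_linear_intros]: "pm_linear L \<Longrightarrow> pm_linear (\<lambda>x. flip (L x))"
  unfolding flip_def by (rule pm_linear_lext_comp)

lemma lext_compose: "lext g (lext f v) = lext (\<lambda>a. lext g (f a)) (v :: 'a \<Rightarrow>\<^sub>0 'k::field)"
  using pm_linear_lext[OF pm_linear_lext_comp[OF pm_linear_id]] .

section \<open>Tensor products\<close>

lemma case_prod_eta: "case_prod f = (\<lambda>p. f (fst p) (snd p))"
  by (simp add: fun_eq_iff split_beta)

lemma bext_bvec [simp]: "bext f (bvec a) (bvec b) = (f a b :: _ \<Rightarrow>\<^sub>0 'k::field)"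
  by (simp add: bext_def)

lemma tens_bvec [simp]: "tens (bvec a) (bvec b) = (bvec (a, b) :: _ \<Rightarrow>\<^sub>0 'k::field)"
  by (simp add: tens_def)

lemma tens3_bvec [simp]: "tens3 (bvec a) (bvec b) (bvec c) = (bvec (a, b, c) :: _ \<Rightarrow>\<^sub>0 'k::field)"
  by (simp add: tens3_def)

lemma bvec_pair: "bvec p = tens (bvec (fst p)) (bvec (snd p) :: _ \<Rightarrow>\<^sub>0 'k::field)"
  by (cases p) simp

lemma bvec_triple:
  "bvec p = tens3 (bvec (fst p)) (bvec (fst (snd p))) (bvec (snd (snd p)) :: _ \<Rightarrow>\<^sub>0 'k::field)"
  by (cases p) auto

lemma flip_bvec: "flip (bvec p) = (bvec (snd p, fst p) :: _ \<Rightarrow>\<^sub>0 'k::field)"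
  by (simp add: flip_def split_beta)

lemma flip_tens [simp]: "flip (tens u v) = tens v (u :: _ \<Rightarrow>\<^sub>0 'k::field)" (is "?L u v = ?R u v")
  by (rule pm_bilinear_eqI[of ?L ?R]) (intro pm_linear_intros | simp add: flip_bvec)+

lemma flip_flip [simp]: "flip (flip X) = (X :: _ \<Rightarrow>\<^sub>0 'k::field)"
  by (rule pm_linear_eqI[of "\<lambda>X. flip (flip X)" "\<lambda>X. X"]) (intro pm_linear_intros | simp add: flip_bvec)+

lemma tens_smult1 [simp]: "tens (smult (c::'k::field) u) v = smult c (tens u v)"
  using pm_linear_smultD[OF pm_linear_tens1[OF pm_linear_id]] .

lemma tens_smult2 [simp]: "tens u (smult (c::'k::field) v) = smult c (tens u v)"
  using pm_linear_smultD[OF pm_linear_tens2[OF pm_linear_id]] .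

definition tens21 :: "('a \<times> 'b \<Rightarrow>\<^sub>0 'k::field) \<Rightarrow> ('c \<Rightarrow>\<^sub>0 'k) \<Rightarrow> ('a \<times> 'b \<times> 'c \<Rightarrow>\<^sub>0 'k)" where
  "tens21 Y z = lext (\<lambda>p. tens3 (bvec (fst p)) (bvec (snd p)) z) Y"

definition tens12 :: "('a \<Rightarrow>\<^sub>0 'k::field) \<Rightarrow> ('b \<times> 'c \<Rightarrow>\<^sub>0 'k) \<Rightarrow> ('a \<times> 'b \<times> 'c \<Rightarrow>\<^sub>0 'k)" where
  "tens12 x Y = lext (\<lambda>p. tens3 x (bvec (fst p)) (bvec (snd p))) Y"

lemma pm_linear_tens21_1 [pm_linear_intros]: "pm_linear L \<Longrightarrow> pm_linear (\<lambda>x. tens21 (L x) z)"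
  unfolding tens21_def by (rule pm_linear_lext_comp)

lemma pm_linear_tens21_2 [pm_linear_intros]: "pm_linear L \<Longrightarrow> pm_linear (\<lambda>x. tens21 Y (L x))"
  unfolding tens21_def
  by (rule pm_linear_lext_fun[where F="\<lambda>p z. tens3 (bvec (fst p)) (bvec (snd p)) z"])
     (intro pm_linear_intros)+

lemma pm_linear_tens12_1 [pm_linear_intros]: "pm_linear L \<Longrightarrow> pm_linear (\<lambda>x. tens12 (L x) Y)"
  unfolding tens12_def
  by (rule pm_linear_lext_fun[where F="\<lambda>p x. tens3 x (bvec (fst p)) (bvec (snd p))"])
     (intro pm_linear_intros)+

lemma pm_linear_tens12_2 [pm_linear_intros]: "pm_linear L \<Longrightarrow> pm_linear (\<lambda>x. tens12 x' (L x))"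
  unfolding tens12_def by (rule pm_linear_lext_comp)

lemma tens21_tens: "tens21 (tens a b) z = tens3 a b z" (is "?L a b z = ?R a b z")
  by (rule pm_trilinear_eqI[of ?L ?R]) (intro pm_linear_intros | simp add: tens21_def)+

lemma tens12_tens: "tens12 x (tens a b) = tens3 x a b" (is "?L x a b = ?R x a b")
  by (rule pm_trilinear_eqI[of ?L ?R]) (intro pm_linear_intros | simp add: tens12_def)+

definition rotate3_left :: "('a \<times> 'b \<times> 'c \<Rightarrow>\<^sub>0 'k::field) \<Rightarrow> ('b \<times> 'c \<times> 'a \<Rightarrow>\<^sub>0 'k)" where
  "rotate3_left X = lext (\<lambda>(a, b, c). bvec (b, c, a)) X"

definition rotate3_right :: "('a \<times> 'b \<times> 'c \<Rightarrow>\<^sub>0 'k::field) \<Rightarrow> ('c \<times> 'a \<times> 'b \<Rightarrow>\<^sub>0 'k)" where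
  "rotate3_right X = lext (\<lambda>(a, b, c). bvec (c, a, b)) X"

definition reverse3 :: "('a \<times> 'b \<times> 'c \<Rightarrow>\<^sub>0 'k::field) \<Rightarrow> ('c \<times> 'b \<times> 'a \<Rightarrow>\<^sub>0 'k)" where
  "reverse3 X = lext (\<lambda>(a, b, c). bvec (c, b, a)) X"

definition swap12 :: "('a \<times> 'b \<times> 'c \<Rightarrow>\<^sub>0 'k::field) \<Rightarrow> ('b \<times> 'a \<times> 'c \<Rightarrow>\<^sub>0 'k)" where
  "swap12 X = lext (\<lambda>(a, b, c). bvec (b, a, c)) X"

definition swap23 :: "('a \<times> 'b \<times> 'c \<Rightarrow>\<^sub>0 'k::field) \<Rightarrow> ('a \<times> 'c \<times> 'b \<Rightarrow>\<^sub>0 'k)" where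
  "swap23 X = lext (\<lambda>(a, b, c). bvec (a, c, b)) X"

lemma pm_linear_rotate3_left [pm_linear_intros]: "pm_linear L \<Longrightarrow> pm_linear (\<lambda>x. rotate3_left (L x))"
  unfolding rotate3_left_def by (rule pm_linear_lext_comp)

lemma pm_linear_rotate3_right [pm_linear_intros]: "pm_linear L \<Longrightarrow> pm_linear (\<lambda>x. rotate3_right (L x))"
  unfolding rotate3_right_def by (rule pm_linear_lext_comp)

lemma pm_linear_reverse3 [pm_linear_intros]: "pm_linear L \<Longrightarrow> pm_linear (\<lambda>x. reverse3 (L x))"
  unfolding reverse3_def by (rule pm_linear_lext_comp)

lemma pm_linear_swap12 [pm_linear_intros]: "pm_linear L \<Longrightarrow> pm_linear (\<lambda>x. swap12 (L x))"
  unfolding swap12_def by (rule pm_linear_lext_comp)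

lemma pm_linear_swap23 [pm_linear_intros]: "pm_linear L \<Longrightarrow> pm_linear (\<lambda>x. swap23 (L x))"
  unfolding swap23_def by (rule pm_linear_lext_comp)

lemma rotate3_left_tens3: "rotate3_left (tens3 a b c) = tens3 b c a" (is "?L a b c = ?R a b c")
  by (rule pm_trilinear_eqI[of ?L ?R]) (intro pm_linear_intros | simp add: rotate3_left_def)+

lemma rotate3_right_tens3: "rotate3_right (tens3 a b c) = tens3 c a b" (is "?L a b c = ?R a b c")
  by (rule pm_trilinear_eqI[of ?L ?R]) (intro pm_linear_intros | simp add: rotate3_right_def)+

lemma reverse3_tens3: "reverse3 (tens3 a b c) = tens3 c b a" (is "?L a b c = ?R a b c")
  by (rule pm_trilinear_eqI[of ?L ?R]) (intro pm_linear_intros | simp add: reverse3_def)+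

lemma swap12_tens3: "swap12 (tens3 a b c) = tens3 b a c" (is "?L a b c = ?R a b c")
  by (rule pm_trilinear_eqI[of ?L ?R]) (intro pm_linear_intros | simp add: swap12_def)+

lemma swap23_tens3: "swap23 (tens3 a b c) = tens3 a c b" (is "?L a b c = ?R a b c")
  by (rule pm_trilinear_eqI[of ?L ?R]) (intro pm_linear_intros | simp add: swap23_def)+

context
  fixes A :: "('i, 'k::field) hopf_data"
begin

definition one3 :: "'i \<times> 'i \<times> 'i \<Rightarrow>\<^sub>0 'k" where
  "one3 = tens3 (one A) (one A) (one A)"

definition antipode_left :: "('i \<times> 'i \<Rightarrow>\<^sub>0 'k) \<Rightarrow> ('i \<times> 'i \<Rightarrow>\<^sub>0 'k)" where
  "antipode_left X = lext (\<lambda>(a, b). tens (antipode A (bvec a)) (bvec b)) X"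

definition antipode_right :: "('i \<times> 'i \<Rightarrow>\<^sub>0 'k) \<Rightarrow> ('i \<times> 'i \<Rightarrow>\<^sub>0 'k)" where
  "antipode_right X = lext (\<lambda>(a, b). tens (bvec a) (antipode A (bvec b))) X"

definition counit_left :: "('i \<times> 'i \<Rightarrow>\<^sub>0 'k) \<Rightarrow> ('i \<Rightarrow>\<^sub>0 'k)" where
  "counit_left X = lext (\<lambda>(a, b). smult (hcounit A a) (bvec b)) X"

definition counit_right :: "('i \<times> 'i \<Rightarrow>\<^sub>0 'k) \<Rightarrow> ('i \<Rightarrow>\<^sub>0 'k)" where
  "counit_right X = lext (\<lambda>(a, b). smult (hcounit A b) (bvec a)) X"

definition counit_leg1 :: "('i \<times> 'i \<times> 'i \<Rightarrow>\<^sub>0 'k) \<Rightarrow> ('i \<times> 'i \<Rightarrow>\<^sub>0 'k)" where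
  "counit_leg1 X = lext (\<lambda>(a, b, c). smult (hcounit A a) (tens (bvec b) (bvec c))) X"

definition counit_leg2 :: "('i \<times> 'i \<times> 'i \<Rightarrow>\<^sub>0 'k) \<Rightarrow> ('i \<times> 'i \<Rightarrow>\<^sub>0 'k)" where
  "counit_leg2 X = lext (\<lambda>(a, b, c). smult (hcounit A b) (tens (bvec a) (bvec c))) X"

definition antipode_mul12 :: "('i \<times> 'i \<times> 'i \<Rightarrow>\<^sub>0 'k) \<Rightarrow> ('i \<times> 'i \<Rightarrow>\<^sub>0 'k)" where
  "antipode_mul12 X = lext (\<lambda>(a, b, c). tens (mul A (antipode A (bvec a)) (bvec b)) (bvec c)) X"

definition antipode_mul23 :: "('i \<times> 'i \<times> 'i \<Rightarrow>\<^sub>0 'k) \<Rightarrow> ('i \<times> 'i \<Rightarrow>\<^sub>0 'k)" where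
  "antipode_mul23 X = lext (\<lambda>(a, b, c). tens (bvec a) (mul A (antipode A (bvec b)) (bvec c))) X"

definition mul_antipode23 :: "('i \<times> 'i \<times> 'i \<Rightarrow>\<^sub>0 'k) \<Rightarrow> ('i \<times> 'i \<Rightarrow>\<^sub>0 'k)" where
  "mul_antipode23 X = lext (\<lambda>(a, b, c). tens (bvec a) (mul A (bvec b) (antipode A (bvec c)))) X"

definition mul2_op :: "('i \<times> 'i \<Rightarrow>\<^sub>0 'k) \<Rightarrow> ('i \<times> 'i \<Rightarrow>\<^sub>0 'k) \<Rightarrow> ('i \<times> 'i \<Rightarrow>\<^sub>0 'k)" where
  "mul2_op = bext (\<lambda>(a, b) (c, d). tens (hmul A a c) (hmul A d b))"

definition nu_twist :: "('i \<Rightarrow>\<^sub>0 'k) \<Rightarrow> ('i \<times> 'i \<Rightarrow>\<^sub>0 'k) \<Rightarrow> ('i \<times> 'i \<Rightarrow>\<^sub>0 'k)" where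
  "nu_twist h X = lext (\<lambda>(a, b). lext (\<lambda>(c1, c2, c3). tens (hmul A a c2)
       (mul A (mul A (antipode A (bvec c1)) (bvec b)) (bvec c3))) (comul3 A h)) X"

text \<open>The maps \<open>nu\<close> and \<open>nu6\<close> with the two copies of \<open>R\<close> made independent.\<close>

definition nu_bilinear :: "('i \<Rightarrow>\<^sub>0 'k) \<Rightarrow> ('i \<times> 'i \<Rightarrow>\<^sub>0 'k) \<Rightarrow> ('i \<times> 'i \<Rightarrow>\<^sub>0 'k) \<Rightarrow> ('i \<times> 'i \<Rightarrow>\<^sub>0 'k)" where
  "nu_bilinear h = bext (\<lambda>(a, b) (a', b'). lext (\<lambda>(c1, c2, c3).
      tens (mul A (mul A (bvec b) (bvec c2)) (bvec b'))
           (mul A (mul A (mul A (antipode A (bvec c1)) (antipode A (bvec a))) (bvec c3)) (bvec a')))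
    (comul3 A h))"

definition nu6_bilinear :: "('i \<Rightarrow>\<^sub>0 'k) \<Rightarrow> ('i \<times> 'i \<Rightarrow>\<^sub>0 'k) \<Rightarrow> ('i \<times> 'i \<Rightarrow>\<^sub>0 'k) \<Rightarrow> ('i \<times> 'i \<Rightarrow>\<^sub>0 'k)" where
  "nu6_bilinear h = bext (\<lambda>(a, b) (a', b'). lext (\<lambda>(c1, c2, c3).
      tens (mul A (mul A (bvec a) (bvec c2)) (bvec a'))
           (mul A (mul A (mul A (antipode A (bvec b')) (antipode A (bvec c1))) (bvec b)) (bvec c3)))
    (comul3 A h))"

definition yang_baxter :: "('i \<times> 'i \<Rightarrow>\<^sub>0 'k) \<Rightarrow> bool" where
  "yang_baxter X \<longleftrightarrow>
     mul3 A (leg12 A X) (mul3 A (leg13 A X) (leg23 A X)) = mul3 A (leg23 A X) (mul3 A (leg13 A X) (leg12 A X))"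

lemma pm_linear_mul1 [pm_linear_intros]: "pm_linear L \<Longrightarrow> pm_linear (\<lambda>x. mul A (L x) v)"
  unfolding mul_def by (rule pm_linear_bext1)
lemma pm_linear_mul2 [pm_linear_intros]: "pm_linear L \<Longrightarrow> pm_linear (\<lambda>x. mul A u (L x))"
  unfolding mul_def by (rule pm_linear_bext2)
lemma pm_linear_mul2_1 [pm_linear_intros]: "pm_linear L \<Longrightarrow> pm_linear (\<lambda>x. mul2 A (L x) v)"
  unfolding mul2_def by (rule pm_linear_bext1)
lemma pm_linear_mul2_2 [pm_linear_intros]: "pm_linear L \<Longrightarrow> pm_linear (\<lambda>x. mul2 A u (L x))"
  unfolding mul2_def by (rule pm_linear_bext2)
lemma pm_linear_mul3_1 [pm_linear_intros]: "pm_linear L \<Longrightarrow> pm_linear (\<lambda>x. mul3 A (L x) v)"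
  unfolding mul3_def by (rule pm_linear_bext1)
lemma pm_linear_mul3_2 [pm_linear_intros]: "pm_linear L \<Longrightarrow> pm_linear (\<lambda>x. mul3 A u (L x))"
  unfolding mul3_def by (rule pm_linear_bext2)
lemma pm_linear_mul2_op1 [pm_linear_intros]: "pm_linear L \<Longrightarrow> pm_linear (\<lambda>x. mul2_op (L x) v)"
  unfolding mul2_op_def by (rule pm_linear_bext1)
lemma pm_linear_mul2_op2 [pm_linear_intros]: "pm_linear L \<Longrightarrow> pm_linear (\<lambda>x. mul2_op u (L x))"
  unfolding mul2_op_def by (rule pm_linear_bext2)
lemma pm_linear_comul [pm_linear_intros]: "pm_linear L \<Longrightarrow> pm_linear (\<lambda>x. comul A (L x))"
  unfolding comul_def by (rule pm_linear_lext_comp)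
lemma pm_linear_antipode [pm_linear_intros]: "pm_linear L \<Longrightarrow> pm_linear (\<lambda>x. antipode A (L x))"
  unfolding antipode_def by (rule pm_linear_lext_comp)
lemma pm_linear_comul_left [pm_linear_intros]: "pm_linear L \<Longrightarrow> pm_linear (\<lambda>x. comul_left A (L x))"
  unfolding comul_left_def by (rule pm_linear_lext_comp)
lemma pm_linear_comul_right [pm_linear_intros]: "pm_linear L \<Longrightarrow> pm_linear (\<lambda>x. comul_right A (L x))"
  unfolding comul_right_def by (rule pm_linear_lext_comp)
lemma pm_linear_comulop_left [pm_linear_intros]: "pm_linear L \<Longrightarrow> pm_linear (\<lambda>x. comulop_left A (L x))"
  unfolding comulop_left_def by (rule pm_linear_lext_comp)
lemma pm_linear_comulop_right [pm_linear_intros]: "pm_linear L \<Longrightarrow> pm_linear (\<lambda>x. comulop_right A (L x))"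
  unfolding comulop_right_def by (rule pm_linear_lext_comp)
lemma pm_linear_leg12 [pm_linear_intros]: "pm_linear L \<Longrightarrow> pm_linear (\<lambda>x. leg12 A (L x))"
  unfolding leg12_def by (rule pm_linear_lext_comp)
lemma pm_linear_leg13 [pm_linear_intros]: "pm_linear L \<Longrightarrow> pm_linear (\<lambda>x. leg13 A (L x))"
  unfolding leg13_def by (rule pm_linear_lext_comp)
lemma pm_linear_leg23 [pm_linear_intros]: "pm_linear L \<Longrightarrow> pm_linear (\<lambda>x. leg23 A (L x))"
  unfolding leg23_def by (rule pm_linear_lext_comp)
lemma pm_linear_antipode_left [pm_linear_intros]: "pm_linear L \<Longrightarrow> pm_linear (\<lambda>x. antipode_left (L x))"
  unfolding antipode_left_def by (rule pm_linear_lext_comp)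
lemma pm_linear_antipode_right [pm_linear_intros]: "pm_linear L \<Longrightarrow> pm_linear (\<lambda>x. antipode_right (L x))"
  unfolding antipode_right_def by (rule pm_linear_lext_comp)
lemma pm_linear_counit_left [pm_linear_intros]: "pm_linear L \<Longrightarrow> pm_linear (\<lambda>x. counit_left (L x))"
  unfolding counit_left_def by (rule pm_linear_lext_comp)
lemma pm_linear_counit_right [pm_linear_intros]: "pm_linear L \<Longrightarrow> pm_linear (\<lambda>x. counit_right (L x))"
  unfolding counit_right_def by (rule pm_linear_lext_comp)
lemma pm_linear_counit_leg1 [pm_linear_intros]: "pm_linear L \<Longrightarrow> pm_linear (\<lambda>x. counit_leg1 (L x))"
  unfolding counit_leg1_def by (rule pm_linear_lext_comp)
lemma pm_linear_counit_leg2 [pm_linear_intros]: "pm_linear L \<Longrightarrow> pm_linear (\<lambda>x. counit_leg2 (L x))"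
  unfolding counit_leg2_def by (rule pm_linear_lext_comp)
lemma pm_linear_antipode_mul12 [pm_linear_intros]: "pm_linear L \<Longrightarrow> pm_linear (\<lambda>x. antipode_mul12 (L x))"
  unfolding antipode_mul12_def by (rule pm_linear_lext_comp)
lemma pm_linear_antipode_mul23 [pm_linear_intros]: "pm_linear L \<Longrightarrow> pm_linear (\<lambda>x. antipode_mul23 (L x))"
  unfolding antipode_mul23_def by (rule pm_linear_lext_comp)
lemma pm_linear_mul_antipode23 [pm_linear_intros]: "pm_linear L \<Longrightarrow> pm_linear (\<lambda>x. mul_antipode23 (L x))"
  unfolding mul_antipode23_def by (rule pm_linear_lext_comp)
lemma pm_linear_nu_twist [pm_linear_intros]: "pm_linear L \<Longrightarrow> pm_linear (\<lambda>x. nu_twist h (L x))"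
  unfolding nu_twist_def by (rule pm_linear_lext_comp)

lemma mul_bvec [simp]: "mul A (bvec a) (bvec b) = hmul A a b"
  by (simp add: mul_def)

lemma mul_smult1 [simp]: "mul A (smult c u) v = smult c (mul A u v)"
  using pm_linear_smultD[OF pm_linear_mul1[OF pm_linear_id]] .

lemma mul_smult2 [simp]: "mul A u (smult c v) = smult c (mul A u v)"
  using pm_linear_smultD[OF pm_linear_mul2[OF pm_linear_id]] .

lemma mul2_tens: "mul2 A (tens a b) (tens c d) = tens (mul A a c) (mul A b d)"
  (is "?L a b c d = ?R a b c d")
  by (rule pm_quadrilinear_eqI[of ?L ?R]) (intro pm_linear_intros | simp add: mul2_def split_beta)+

lemma mul2_op_tens: "mul2_op (tens a b) (tens c d) = tens (mul A a c) (mul A d b)"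
  (is "?L a b c d = ?R a b c d")
  by (rule pm_quadrilinear_eqI[of ?L ?R]) (intro pm_linear_intros | simp add: mul2_op_def split_beta)+

lemma mul3_tens3_bvec:
  "mul3 A (tens3 a b c) (bvec (d, e, f)) = tens3 (mul A a (bvec d)) (mul A b (bvec e)) (mul A c (bvec f))"
  (is "?L a b c = ?R a b c")
  by (rule pm_trilinear_eqI[of ?L ?R]) (intro pm_linear_intros | simp add: mul3_def split_beta)+

lemma mul3_tens3: "mul3 A (tens3 a b c) (tens3 d e f) = tens3 (mul A a d) (mul A b e) (mul A c f)"
  (is "?L d e f = ?R d e f")
  by (rule pm_trilinear_eqI[of ?L ?R]) (intro pm_linear_intros | simp add: mul3_tens3_bvec)+

lemma mul3_tens21: "mul3 A (tens21 Y z) (tens21 Y' z') = tens21 (mul2 A Y Y') (mul A z z')"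
  (is "?L Y z Y' z' = ?R Y z Y' z'")
  by (rule pm_quadrilinear_eqI[of ?L ?R])
     (intro pm_linear_intros | simp only: bvec_pair tens21_tens mul3_tens3 mul2_tens)+

lemma mul3_tens12: "mul3 A (tens12 z Y) (tens12 z' Y') = tens12 (mul A z z') (mul2 A Y Y')"
  (is "?L z Y z' Y' = ?R z Y z' Y'")
  by (rule pm_quadrilinear_eqI[of ?L ?R])
     (intro pm_linear_intros | simp only: bvec_pair tens12_tens mul3_tens3 mul2_tens)+

lemma leg12_tens: "leg12 A (tens a b) = tens3 a b (one A)" (is "?L a b = ?R a b")
  by (rule pm_bilinear_eqI[of ?L ?R]) (intro pm_linear_intros | simp add: leg12_def split_beta)+

lemma leg13_tens: "leg13 A (tens a b) = tens3 a (one A) b" (is "?L a b = ?R a b")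
  by (rule pm_bilinear_eqI[of ?L ?R]) (intro pm_linear_intros | simp add: leg13_def split_beta)+

lemma leg23_tens: "leg23 A (tens a b) = tens3 (one A) a b" (is "?L a b = ?R a b")
  by (rule pm_bilinear_eqI[of ?L ?R]) (intro pm_linear_intros | simp add: leg23_def split_beta)+

lemma antipode_left_tens: "antipode_left (tens a b) = tens (antipode A a) b" (is "?L a b = ?R a b")
  by (rule pm_bilinear_eqI[of ?L ?R]) (intro pm_linear_intros | simp add: antipode_left_def antipode_def split_beta)+

lemma antipode_right_tens: "antipode_right (tens a b) = tens a (antipode A b)" (is "?L a b = ?R a b")
  by (rule pm_bilinear_eqI[of ?L ?R]) (intro pm_linear_intros | simp add: antipode_right_def antipode_def split_beta)+

lemma antipode_right_flip: "antipode_right (flip X) = flip (antipode_left X)"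
  by (rule pm_linear_eqI[of "\<lambda>X. antipode_right (flip X)" "\<lambda>X. flip (antipode_left X)"])
     (intro pm_linear_intros | simp only: bvec_pair flip_tens antipode_right_tens antipode_left_tens)+

lemma antipode_mul12_tens3: "antipode_mul12 (tens3 a b c) = tens (mul A (antipode A a) b) c"
  (is "?L a b c = ?R a b c")
  by (rule pm_trilinear_eqI[of ?L ?R]) (intro pm_linear_intros | simp add: antipode_mul12_def antipode_def split_beta)+

lemma antipode_mul23_tens3: "antipode_mul23 (tens3 a b c) = tens a (mul A (antipode A b) c)"
  (is "?L a b c = ?R a b c")
  by (rule pm_trilinear_eqI[of ?L ?R]) (intro pm_linear_intros | simp add: antipode_mul23_def antipode_def split_beta)+

lemma mul_antipode23_tens3: "mul_antipode23 (tens3 a b c) = tens a (mul A b (antipode A c))"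
  (is "?L a b c = ?R a b c")
  by (rule pm_trilinear_eqI[of ?L ?R]) (intro pm_linear_intros | simp add: mul_antipode23_def antipode_def split_beta)+

lemma counit_leg1_tens3: "counit_leg1 (tens3 (bvec a) b c) = smult (hcounit A a) (tens b c)"
  (is "?L b c = ?R b c")
  by (rule pm_bilinear_eqI[of ?L ?R]) (intro pm_linear_intros | simp add: counit_leg1_def split_beta)+

lemma counit_leg2_tens3: "counit_leg2 (tens3 a (bvec b) c) = smult (hcounit A b) (tens a c)"
  (is "?L a c = ?R a c")
  by (rule pm_bilinear_eqI[of ?L ?R]) (intro pm_linear_intros | simp add: counit_leg2_def split_beta)+

lemma counit_leg1_tens21: "counit_leg1 (tens21 Y z) = tens (counit_left Y) z" (is "?L Y z = ?R Y z")
  by (rule pm_bilinear_eqI[of ?L ?R])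
     (intro pm_linear_intros | simp only: bvec_pair tens21_tens counit_leg1_tens3 | simp add: counit_left_def split_beta)+

lemma counit_leg2_tens12: "counit_leg2 (tens12 x Y) = tens x (counit_left Y)" (is "?L x Y = ?R x Y")
  by (rule pm_bilinear_eqI[of ?L ?R])
     (intro pm_linear_intros | simp only: bvec_pair tens12_tens counit_leg2_tens3 | simp add: counit_left_def split_beta)+

lemma counit_bvec [simp]: "counit A (bvec a) = hcounit A a"
  by (simp add: counit_def lfun_def bvec_def)

end

section \<open>Consequences of the Hopf algebra axioms\<close>

locale hopf =
  fixes A :: "('i, 'k::field) hopf_data"
  assumes hopf: "hopf_algebra A"
begin

lemma mul_assoc: "mul A (mul A x y) z = mul A x (mul A y z)"
  using hopf unfolding hopf_algebra_def by blast

lemma mul_one_left [simp]: "mul A (one A) x = x"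
  using hopf unfolding hopf_algebra_def by blast

lemma mul_one_right [simp]: "mul A x (one A) = x"
  using hopf unfolding hopf_algebra_def by blast

lemma counit_left_comul: "counit_left A (comul A x) = x"
  using hopf unfolding hopf_algebra_def counit_left_def by blast

lemma comul_mul: "comul A (mul A x y) = mul2 A (comul A x) (comul A y)"
  using hopf unfolding hopf_algebra_def by blast

lemma comul_one: "comul A (one A) = one2 A"
  using hopf unfolding hopf_algebra_def by blast

lemma antipode_mul_comul:
  "lext (\<lambda>(a, b). mul A (antipode A (bvec a)) (bvec b)) (comul A x) = smult (counit A x) (one A)"
  using hopf unfolding hopf_algebra_def by blast

lemma mul_antipode_comul:
  "lext (\<lambda>(a, b). mul A (bvec a) (antipode A (bvec b))) (comul A x) = smult (counit A x) (one A)"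
  using hopf unfolding hopf_algebra_def by blast

lemma mul2_assoc: "mul2 A (mul2 A X Y) Z = mul2 A X (mul2 A Y Z)" (is "?L X Y Z = ?R X Y Z")
  by (rule pm_trilinear_eqI[of ?L ?R]) (intro pm_linear_intros | simp only: bvec_pair mul2_tens mul_assoc)+

lemma mul2_one_left [simp]: "mul2 A (one2 A) X = X"
  by (rule pm_linear_eqI[of "mul2 A (one2 A)" "\<lambda>X. X"])
     (intro pm_linear_intros | simp only: bvec_pair mul2_tens one2_def mul_one_left)+

lemma mul2_one_right [simp]: "mul2 A X (one2 A) = X"
  by (rule pm_linear_eqI[of "\<lambda>X. mul2 A X (one2 A)" "\<lambda>X. X"])
     (intro pm_linear_intros | simp only: bvec_pair mul2_tens one2_def mul_one_right)+

lemma mul2_inverse_unique: "mul2 A X Y = one2 A \<Longrightarrow> mul2 A Y Z = one2 A \<Longrightarrow> X = Z"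
  by (metis mul2_assoc mul2_one_left mul2_one_right)

lemma mul3_assoc: "mul3 A (mul3 A X Y) Z = mul3 A X (mul3 A Y Z)" (is "?L X Y Z = ?R X Y Z")
  by (rule pm_trilinear_eqI[of ?L ?R]) (intro pm_linear_intros | simp only: bvec_triple mul3_tens3 mul_assoc)+

lemma mul3_one_left [simp]: "mul3 A (one3 A) X = X"
  by (rule pm_linear_eqI[of "mul3 A (one3 A)" "\<lambda>X. X"])
     (intro pm_linear_intros | simp only: bvec_triple mul3_tens3 one3_def mul_one_left)+

lemma mul3_one_right [simp]: "mul3 A X (one3 A) = X"
  by (rule pm_linear_eqI[of "\<lambda>X. mul3 A X (one3 A)" "\<lambda>X. X"])
     (intro pm_linear_intros | simp only: bvec_triple mul3_tens3 one3_def mul_one_right)+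

lemma mul3_inverse_unique: "mul3 A X Y = one3 A \<Longrightarrow> mul3 A Y Z = one3 A \<Longrightarrow> X = Z"
  by (metis mul3_assoc mul3_one_left mul3_one_right)

lemma mul3_cancel_left: "mul3 A X Y = one3 A \<Longrightarrow> mul3 A X (mul3 A Y Z) = Z"
  by (metis mul3_assoc mul3_one_left)

lemma mul2_op_assoc: "mul2_op A (mul2_op A X Y) Z = mul2_op A X (mul2_op A Y Z)" (is "?L X Y Z = ?R X Y Z")
  by (rule pm_trilinear_eqI[of ?L ?R]) (intro pm_linear_intros | simp only: bvec_pair mul2_op_tens mul_assoc)+

lemma mul2_op_one_right [simp]: "mul2_op A X (one2 A) = X"
  by (rule pm_linear_eqI[of "\<lambda>X. mul2_op A X (one2 A)" "\<lambda>X. X"])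
     (intro pm_linear_intros | simp only: bvec_pair mul2_op_tens one2_def mul_one_right mul_one_left)+

lemma flip_mul2: "flip (mul2 A X Y) = mul2 A (flip X) (flip Y)" (is "?L X Y = ?R X Y")
  by (rule pm_bilinear_eqI[of ?L ?R]) (intro pm_linear_intros | simp only: bvec_pair mul2_tens flip_tens)+

lemma flip_one2 [simp]: "flip (one2 A) = one2 A"
  by (simp add: one2_def)

lemma leg12_mul2: "leg12 A (mul2 A X Y) = mul3 A (leg12 A X) (leg12 A Y)" (is "?L X Y = ?R X Y")
  by (rule pm_bilinear_eqI[of ?L ?R])
     (intro pm_linear_intros | simp only: bvec_pair mul2_tens leg12_tens mul3_tens3 mul_one_left)+

lemma leg13_mul2: "leg13 A (mul2 A X Y) = mul3 A (leg13 A X) (leg13 A Y)" (is "?L X Y = ?R X Y")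
  by (rule pm_bilinear_eqI[of ?L ?R])
     (intro pm_linear_intros | simp only: bvec_pair mul2_tens leg13_tens mul3_tens3 mul_one_left)+

lemma leg23_mul2: "leg23 A (mul2 A X Y) = mul3 A (leg23 A X) (leg23 A Y)" (is "?L X Y = ?R X Y")
  by (rule pm_bilinear_eqI[of ?L ?R])
     (intro pm_linear_intros | simp only: bvec_pair mul2_tens leg23_tens mul3_tens3 mul_one_left)+

lemma leg12_one2 [simp]: "leg12 A (one2 A) = one3 A"
  by (simp add: one2_def leg12_tens one3_def)

lemma leg13_one2 [simp]: "leg13 A (one2 A) = one3 A"
  by (simp add: one2_def leg13_tens one3_def)

lemma leg23_one2 [simp]: "leg23 A (one2 A) = one3 A"
  by (simp add: one2_def leg23_tens one3_def)

lemma comul_left_tens: "comul_left A (tens x y) = tens21 (comul A x) y" (is "?L x y = ?R x y")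
  by (rule pm_bilinear_eqI[of ?L ?R])
     (intro pm_linear_intros | simp add: comul_left_def tens21_def case_prod_eta)+

lemma comul_right_tens: "comul_right A (tens x y) = tens12 x (comul A y)" (is "?L x y = ?R x y")
  by (rule pm_bilinear_eqI[of ?L ?R])
     (intro pm_linear_intros | simp add: comul_right_def tens12_def case_prod_eta)+

lemma comul_left_mul2: "comul_left A (mul2 A X Y) = mul3 A (comul_left A X) (comul_left A Y)"
  (is "?L X Y = ?R X Y")
  by (rule pm_bilinear_eqI[of ?L ?R])
     (intro pm_linear_intros | simp only: bvec_pair mul2_tens comul_left_tens comul_mul mul3_tens21)+

lemma comul_right_mul2: "comul_right A (mul2 A X Y) = mul3 A (comul_right A X) (comul_right A Y)"
  (is "?L X Y = ?R X Y")
  by (rule pm_bilinear_eqI[of ?L ?R])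
     (intro pm_linear_intros | simp only: bvec_pair mul2_tens comul_right_tens comul_mul mul3_tens12)+

lemma comul_left_one2 [simp]: "comul_left A (one2 A) = one3 A"
  by (simp add: one2_def comul_left_tens comul_one tens21_tens one3_def)

lemma comul_right_one2 [simp]: "comul_right A (one2 A) = one3 A"
  by (simp add: one2_def comul_right_tens comul_one tens12_tens one3_def)

lemma comulop_left_eq_swap12: "comulop_left A X = swap12 (comul_left A X)"
  by (rule pm_linear_eqI[of "comulop_left A" "\<lambda>X. swap12 (comul_left A X)"])
     (intro pm_linear_intros | simp add: comulop_left_def comul_left_def swap12_def lext_compose case_prod_eta)+

lemma comulop_right_eq_swap23: "comulop_right A X = swap23 (comul_right A X)"
  by (rule pm_linear_eqI[of "comulop_right A" "\<lambda>X. swap23 (comul_right A X)"])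
     (intro pm_linear_intros | simp add: comulop_right_def comul_right_def swap23_def lext_compose case_prod_eta)+

lemma comul_left_flip: "comul_left A (flip X) = rotate3_left (comul_right A X)"
  by (rule pm_linear_eqI[of "\<lambda>X. comul_left A (flip X)" "\<lambda>X. rotate3_left (comul_right A X)"])
     (intro pm_linear_intros
      | simp add: flip_def comul_left_def comul_right_def rotate3_left_def lext_compose case_prod_eta)+

lemma comul_right_flip: "comul_right A (flip X) = rotate3_right (comul_left A X)"
  by (rule pm_linear_eqI[of "\<lambda>X. comul_right A (flip X)" "\<lambda>X. rotate3_right (comul_left A X)"])
     (intro pm_linear_intros
      | simp add: flip_def comul_left_def comul_right_def rotate3_right_def lext_compose case_prod_eta)+

lemma rotate3_left_mul3: "rotate3_left (mul3 A X Y) = mul3 A (rotate3_left X) (rotate3_left Y)"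
  (is "?L X Y = ?R X Y")
  by (rule pm_bilinear_eqI[of ?L ?R]) (intro pm_linear_intros | simp only: bvec_triple mul3_tens3 rotate3_left_tens3)+

lemma rotate3_right_mul3: "rotate3_right (mul3 A X Y) = mul3 A (rotate3_right X) (rotate3_right Y)"
  (is "?L X Y = ?R X Y")
  by (rule pm_bilinear_eqI[of ?L ?R]) (intro pm_linear_intros | simp only: bvec_triple mul3_tens3 rotate3_right_tens3)+

lemma reverse3_mul3: "reverse3 (mul3 A X Y) = mul3 A (reverse3 X) (reverse3 Y)"
  (is "?L X Y = ?R X Y")
  by (rule pm_bilinear_eqI[of ?L ?R]) (intro pm_linear_intros | simp only: bvec_triple mul3_tens3 reverse3_tens3)+

lemma swap12_mul3: "swap12 (mul3 A X Y) = mul3 A (swap12 X) (swap12 Y)"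
  (is "?L X Y = ?R X Y")
  by (rule pm_bilinear_eqI[of ?L ?R]) (intro pm_linear_intros | simp only: bvec_triple mul3_tens3 swap12_tens3)+

lemma swap23_mul3: "swap23 (mul3 A X Y) = mul3 A (swap23 X) (swap23 Y)"
  (is "?L X Y = ?R X Y")
  by (rule pm_bilinear_eqI[of ?L ?R]) (intro pm_linear_intros | simp only: bvec_triple mul3_tens3 swap23_tens3)+

lemma rotate3_left_leg12: "rotate3_left (leg12 A X) = leg13 A (flip X)"
  by (rule pm_linear_eqI[of "\<lambda>X. rotate3_left (leg12 A X)" "\<lambda>X. leg13 A (flip X)"])
     (intro pm_linear_intros | simp only: bvec_pair leg12_tens leg13_tens rotate3_left_tens3 flip_tens)+

lemma rotate3_left_leg13: "rotate3_left (leg13 A X) = leg23 A (flip X)"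
  by (rule pm_linear_eqI[of "\<lambda>X. rotate3_left (leg13 A X)" "\<lambda>X. leg23 A (flip X)"])
     (intro pm_linear_intros | simp only: bvec_pair leg13_tens leg23_tens rotate3_left_tens3 flip_tens)+

lemma rotate3_right_leg13: "rotate3_right (leg13 A X) = leg12 A (flip X)"
  by (rule pm_linear_eqI[of "\<lambda>X. rotate3_right (leg13 A X)" "\<lambda>X. leg12 A (flip X)"])
     (intro pm_linear_intros | simp only: bvec_pair leg13_tens leg12_tens rotate3_right_tens3 flip_tens)+

lemma rotate3_right_leg23: "rotate3_right (leg23 A X) = leg13 A (flip X)"
  by (rule pm_linear_eqI[of "\<lambda>X. rotate3_right (leg23 A X)" "\<lambda>X. leg13 A (flip X)"])
     (intro pm_linear_intros | simp only: bvec_pair leg23_tens leg13_tens rotate3_right_tens3 flip_tens)+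

lemma reverse3_leg12: "reverse3 (leg12 A X) = leg23 A (flip X)"
  by (rule pm_linear_eqI[of "\<lambda>X. reverse3 (leg12 A X)" "\<lambda>X. leg23 A (flip X)"])
     (intro pm_linear_intros | simp only: bvec_pair leg12_tens leg23_tens reverse3_tens3 flip_tens)+

lemma reverse3_leg13: "reverse3 (leg13 A X) = leg13 A (flip X)"
  by (rule pm_linear_eqI[of "\<lambda>X. reverse3 (leg13 A X)" "\<lambda>X. leg13 A (flip X)"])
     (intro pm_linear_intros | simp only: bvec_pair leg13_tens reverse3_tens3 flip_tens)+

lemma reverse3_leg23: "reverse3 (leg23 A X) = leg12 A (flip X)"
  by (rule pm_linear_eqI[of "\<lambda>X. reverse3 (leg23 A X)" "\<lambda>X. leg12 A (flip X)"])
     (intro pm_linear_intros | simp only: bvec_pair leg23_tens leg12_tens reverse3_tens3 flip_tens)+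

lemma swap12_leg13: "swap12 (leg13 A X) = leg23 A X"
  by (rule pm_linear_eqI[of "\<lambda>X. swap12 (leg13 A X)" "\<lambda>X. leg23 A X"])
     (intro pm_linear_intros | simp only: bvec_pair leg13_tens leg23_tens swap12_tens3)+

lemma swap12_leg23: "swap12 (leg23 A X) = leg13 A X"
  by (rule pm_linear_eqI[of "\<lambda>X. swap12 (leg23 A X)" "\<lambda>X. leg13 A X"])
     (intro pm_linear_intros | simp only: bvec_pair leg13_tens leg23_tens swap12_tens3)+

lemma swap23_leg12: "swap23 (leg12 A X) = leg13 A X"
  by (rule pm_linear_eqI[of "\<lambda>X. swap23 (leg12 A X)" "\<lambda>X. leg13 A X"])
     (intro pm_linear_intros | simp only: bvec_pair leg13_tens leg12_tens swap23_tens3)+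

lemma swap23_leg13: "swap23 (leg13 A X) = leg12 A X"
  by (rule pm_linear_eqI[of "\<lambda>X. swap23 (leg13 A X)" "\<lambda>X. leg12 A X"])
     (intro pm_linear_intros | simp only: bvec_pair leg13_tens leg12_tens swap23_tens3)+

lemma counit_leg1_comul_left: "counit_leg1 A (comul_left A X) = X"
  by (rule pm_linear_eqI[of "\<lambda>X. counit_leg1 A (comul_left A X)" "\<lambda>X. X"])
     (intro pm_linear_intros | simp only: bvec_pair comul_left_tens counit_leg1_tens21 counit_left_comul)+

lemma counit_leg2_comul_right: "counit_leg2 A (comul_right A X) = X"
  by (rule pm_linear_eqI[of "\<lambda>X. counit_leg2 A (comul_right A X)" "\<lambda>X. X"])
     (intro pm_linear_intros | simp only: bvec_pair comul_right_tens counit_leg2_tens12 counit_left_comul)+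

lemma antipode_mul12_tens21:
  "antipode_mul12 A (tens21 Y z) = tens (lext (\<lambda>(a, b). mul A (antipode A (bvec a)) (bvec b)) Y) z"
  (is "?L Y z = ?R Y z")
  by (rule pm_bilinear_eqI[of ?L ?R])
     (intro pm_linear_intros | simp only: bvec_pair tens21_tens antipode_mul12_tens3 | simp add: split_beta)+

lemma mul_antipode23_tens12:
  "mul_antipode23 A (tens12 x Y) = tens x (lext (\<lambda>(a, b). mul A (bvec a) (antipode A (bvec b))) Y)"
  (is "?L x Y = ?R x Y")
  by (rule pm_bilinear_eqI[of ?L ?R])
     (intro pm_linear_intros | simp only: bvec_pair tens12_tens mul_antipode23_tens3 | simp add: split_beta)+

lemma antipode_mul23_tens12:
  "antipode_mul23 A (tens12 x Y) = tens x (lext (\<lambda>(a, b). mul A (antipode A (bvec a)) (bvec b)) Y)"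
  (is "?L x Y = ?R x Y")
  by (rule pm_bilinear_eqI[of ?L ?R])
     (intro pm_linear_intros | simp only: bvec_pair tens12_tens antipode_mul23_tens3 | simp add: split_beta)+

lemma antipode_mul12_comul_left: "antipode_mul12 A (comul_left A X) = tens (one A) (counit_left A X)"
  by (rule pm_linear_eqI[of "\<lambda>X. antipode_mul12 A (comul_left A X)" "\<lambda>X. tens (one A) (counit_left A X)"])
     (intro pm_linear_intros
      | simp only: bvec_pair comul_left_tens antipode_mul12_tens21 antipode_mul_comul
      | simp add: counit_left_def split_beta)+

lemma mul_antipode23_comul_right: "mul_antipode23 A (comul_right A X) = tens (counit_right A X) (one A)"
  by (rule pm_linear_eqI[of "\<lambda>X. mul_antipode23 A (comul_right A X)" "\<lambda>X. tens (counit_right A X) (one A)"])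
     (intro pm_linear_intros
      | simp only: bvec_pair comul_right_tens mul_antipode23_tens12 mul_antipode_comul
      | simp add: counit_right_def split_beta)+

lemma antipode_mul23_comul_right: "antipode_mul23 A (comul_right A X) = tens (counit_right A X) (one A)"
  by (rule pm_linear_eqI[of "\<lambda>X. antipode_mul23 A (comul_right A X)" "\<lambda>X. tens (counit_right A X) (one A)"])
     (intro pm_linear_intros
      | simp only: bvec_pair comul_right_tens antipode_mul23_tens12 antipode_mul_comul
      | simp add: counit_right_def split_beta)+

lemma counit_leg1_leg13_leg23:
  "counit_leg1 A (mul3 A (leg13 A X) (leg23 A Y)) = mul2 A (tens (one A) (counit_left A X)) Y"
  (is "?L X Y = ?R X Y")
  by (rule pm_bilinear_eqI[of ?L ?R])
     (intro pm_linear_intros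
      | simp only: bvec_pair leg13_tens leg23_tens mul3_tens3 counit_leg1_tens3 mul2_tens mul_one_left mul_one_right
      | simp add: counit_left_def split_beta)+

lemma antipode_mul12_leg13_leg23:
  "antipode_mul12 A (mul3 A (leg13 A X) (leg23 A Y)) = mul2 A (antipode_left A X) Y"
  (is "?L X Y = ?R X Y")
  by (rule pm_bilinear_eqI[of ?L ?R])
     (intro pm_linear_intros
      | simp only: bvec_pair leg13_tens leg23_tens mul3_tens3 antipode_mul12_tens3 antipode_left_tens
          mul2_tens mul_one_left mul_one_right)+

lemma counit_leg2_leg13_leg12:
  "counit_leg2 A (mul3 A (leg13 A X) (leg12 A Y)) = mul2 A X (tens (counit_right A Y) (one A))"
  (is "?L X Y = ?R X Y")
  by (rule pm_bilinear_eqI[of ?L ?R])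
     (intro pm_linear_intros
      | simp only: bvec_pair leg13_tens leg12_tens mul3_tens3 counit_leg2_tens3 mul2_tens mul_one_left mul_one_right
      | simp add: counit_right_def split_beta)+

lemma mul_antipode23_leg13_leg12:
  "mul_antipode23 A (mul3 A (leg13 A X) (leg12 A Y)) = mul2_op A (antipode_right A X) Y"
  (is "?L X Y = ?R X Y")
  by (rule pm_bilinear_eqI[of ?L ?R])
     (intro pm_linear_intros
      | simp only: bvec_pair leg13_tens leg12_tens mul3_tens3 mul_antipode23_tens3 antipode_right_tens
          mul2_op_tens mul_one_left mul_one_right)+

lemma antipode_mul23_leg13_leg12:
  "antipode_mul23 A (mul3 A (leg13 A X) (leg12 A Y)) = mul2_op A X (antipode_right A Y)"
  (is "?L X Y = ?R X Y")
  by (rule pm_bilinear_eqI[of ?L ?R])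
     (intro pm_linear_intros
      | simp only: bvec_pair leg13_tens leg12_tens mul3_tens3 antipode_mul23_tens3 antipode_right_tens
          mul2_op_tens mul_one_left mul_one_right)+

subsection \<open>Elements satisfying conditions (1) and (2)\<close>

lemma leg_mul3_inverse:
  assumes "mul2 A X Y = one2 A"
  shows "mul3 A (leg12 A X) (leg12 A Y) = one3 A" "mul3 A (leg13 A X) (leg13 A Y) = one3 A"
    "mul3 A (leg23 A X) (leg23 A Y) = one3 A"
  using assms by (simp_all flip: leg12_mul2 leg13_mul2 leg23_mul2)

lemma counit_left_eq_one:
  assumes "comul_left A X = mul3 A (leg13 A X) (leg23 A X)" and "mul2 A X Y = one2 A"
  shows "tens (one A) (counit_left A X) = one2 A"
proof -
  have "X = mul2 A (tens (one A) (counit_left A X)) X"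
    using counit_leg1_comul_left[of X] counit_leg1_leg13_leg23[of X X] assms(1) by simp
  then have "mul2 A X Y = mul2 A (tens (one A) (counit_left A X)) (mul2 A X Y)"
    by (metis mul2_assoc)
  then show ?thesis using assms(2) by simp
qed

lemma antipode_left_eq_inverse:
  assumes "comul_left A X = mul3 A (leg13 A X) (leg23 A X)"
    and "mul2 A X Y = one2 A" "mul2 A Y X = one2 A"
  shows "antipode_left A X = Y"
proof -
  have "mul2 A (antipode_left A X) X = one2 A"
    using antipode_mul12_comul_left[of X] antipode_mul12_leg13_leg23[of X X] assms(1)
      counit_left_eq_one[OF assms(1,2)] by simp
  then show ?thesis using mul2_inverse_unique assms(2) by blast
qed

lemma counit_right_eq_one:
  assumes "comul_right A X = mul3 A (leg13 A X) (leg12 A X)" and "mul2 A Y X = one2 A"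
  shows "tens (counit_right A X) (one A) = one2 A"
proof -
  have "X = mul2 A X (tens (counit_right A X) (one A))"
    using counit_leg2_comul_right[of X] counit_leg2_leg13_leg12[of X X] assms(1) by simp
  then have "mul2 A Y X = mul2 A (mul2 A Y X) (tens (counit_right A X) (one A))"
    by (metis mul2_assoc)
  then show ?thesis using assms(2) by simp
qed

lemma mul2_op_antipode_right_self:
  assumes "comul_right A X = mul3 A (leg13 A X) (leg12 A X)" and "mul2 A Y X = one2 A"
  shows "mul2_op A (antipode_right A X) X = one2 A"
  using mul_antipode23_comul_right[of X] mul_antipode23_leg13_leg12[of X X] assms(1)
    counit_right_eq_one[OF assms] by simp

lemma mul2_op_self_antipode_right:
  assumes "comul_right A X = mul3 A (leg13 A X) (leg12 A X)" and "mul2 A Y X = one2 A"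
  shows "mul2_op A X (antipode_right A X) = one2 A"
  using antipode_mul23_comul_right[of X] antipode_mul23_leg13_leg12[of X X] assms(1)
    counit_right_eq_one[OF assms] by simp

lemma comul_left_inverse:
  assumes "comul_left A X = mul3 A (leg13 A X) (leg23 A X)"
    and XY: "mul2 A X Y = one2 A" and YX: "mul2 A Y X = one2 A"
  shows "comul_left A Y = mul3 A (leg23 A Y) (leg13 A Y)"
proof (rule mul3_inverse_unique)
  show "mul3 A (comul_left A Y) (comul_left A X) = one3 A"
    using comul_left_mul2[of Y X] YX by simp
  show "mul3 A (comul_left A X) (mul3 A (leg23 A Y) (leg13 A Y)) = one3 A"
    using assms(1) leg_mul3_inverse[OF XY] by (simp add: mul3_assoc mul3_cancel_left)
qed

lemma comul_right_inverse:
  assumes "comul_right A X = mul3 A (leg13 A X) (leg12 A X)"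
    and XY: "mul2 A X Y = one2 A" and YX: "mul2 A Y X = one2 A"
  shows "comul_right A Y = mul3 A (leg12 A Y) (leg13 A Y)"
proof (rule mul3_inverse_unique)
  show "mul3 A (comul_right A Y) (comul_right A X) = one3 A"
    using comul_right_mul2[of Y X] YX by simp
  show "mul3 A (comul_right A X) (mul3 A (leg12 A Y) (leg13 A Y)) = one3 A"
    using assms(1) leg_mul3_inverse[OF XY] by (simp add: mul3_assoc mul3_cancel_left)
qed

lemma comul_left_flip_eq:
  "comul_right A X = mul3 A (leg12 A X) (leg13 A X) \<Longrightarrow>
   comul_left A (flip X) = mul3 A (leg13 A (flip X)) (leg23 A (flip X))"
  by (simp add: comul_left_flip rotate3_left_mul3 rotate3_left_leg12 rotate3_left_leg13)

lemma comul_right_flip_eq: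
  "comul_left A X = mul3 A (leg23 A X) (leg13 A X) \<Longrightarrow>
   comul_right A (flip X) = mul3 A (leg13 A (flip X)) (leg12 A (flip X))"
  by (simp add: comul_right_flip rotate3_right_mul3 rotate3_right_leg23 rotate3_right_leg13)

lemma invertible2_flip: "invertible2 A X \<Longrightarrow> invertible2 A (flip X)"
  unfolding invertible2_def by (metis flip_mul2 flip_one2)

subsection \<open>Conditions (3) and (4) and the Yang--Baxter equation\<close>

lemma comulop_right_iff_yang_baxter:
  assumes "comul_right A X = mul3 A (leg13 A X) (leg12 A X)"
  shows "mul3 A (comulop_right A X) (leg23 A X) = mul3 A (leg23 A X) (comul_right A X) \<longleftrightarrow>
    yang_baxter A X"
  using assms
  by (auto simp: yang_baxter_def comulop_right_eq_swap23 swap23_mul3 swap23_leg12 swap23_leg13 mul3_assoc)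

lemma comulop_left_iff_yang_baxter:
  assumes "comul_left A X = mul3 A (leg13 A X) (leg23 A X)"
  shows "mul3 A (comulop_left A X) (leg12 A X) = mul3 A (leg12 A X) (comul_left A X) \<longleftrightarrow>
    yang_baxter A X"
  using assms
  by (auto simp: yang_baxter_def comulop_left_eq_swap12 swap12_mul3 swap12_leg13 swap12_leg23 mul3_assoc)

lemma yang_baxter_inverse:
  assumes "yang_baxter A X" and XY: "mul2 A X Y = one2 A" and YX: "mul2 A Y X = one2 A"
  shows "yang_baxter A Y"
proof -
  note cancel = leg_mul3_inverse[OF XY] leg_mul3_inverse[OF YX]
  have "mul3 A (leg23 A Y) (mul3 A (leg13 A Y) (leg12 A Y)) =
        mul3 A (leg12 A Y) (mul3 A (leg13 A Y) (leg23 A Y))"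
  proof (rule mul3_inverse_unique)
    show "mul3 A (mul3 A (leg23 A Y) (mul3 A (leg13 A Y) (leg12 A Y)))
        (mul3 A (leg12 A X) (mul3 A (leg13 A X) (leg23 A X))) = one3 A"
      using cancel by (simp add: mul3_assoc mul3_cancel_left)
    show "mul3 A (mul3 A (leg12 A X) (mul3 A (leg13 A X) (leg23 A X)))
        (mul3 A (leg12 A Y) (mul3 A (leg13 A Y) (leg23 A Y))) = one3 A"
      using assms(1) cancel by (simp add: yang_baxter_def mul3_assoc mul3_cancel_left)
  qed
  then show ?thesis by (simp add: yang_baxter_def)
qed

lemma yang_baxter_flip:
  assumes "yang_baxter A X"
  shows "yang_baxter A (flip X)"
proof -
  have "reverse3 (mul3 A (leg12 A X) (mul3 A (leg13 A X) (leg23 A X))) =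
        reverse3 (mul3 A (leg23 A X) (mul3 A (leg13 A X) (leg12 A X)))"
    using assms by (simp add: yang_baxter_def)
  then show ?thesis
    by (simp add: yang_baxter_def reverse3_mul3 reverse3_leg12 reverse3_leg13 reverse3_leg23)
qed

lemma comul_conditions_flip_inverse:
  assumes R1: "comul_left A R = mul3 A (leg13 A R) (leg23 A R)"
    and R2: "comul_right A R = mul3 A (leg13 A R) (leg12 A R)"
    and R3: "mul3 A (comulop_right A R) (leg23 A R) = mul3 A (leg23 A R) (comul_right A R)"
    and RP: "mul2 A R P = one2 A" and PR: "mul2 A P R = one2 A"
  shows "comul_left A (flip P) = mul3 A (leg13 A (flip P)) (leg23 A (flip P))"
    and "comul_right A (flip P) = mul3 A (leg13 A (flip P)) (leg12 A (flip P))"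
    and "mul3 A (comulop_right A (flip P)) (leg23 A (flip P)) =
      mul3 A (leg23 A (flip P)) (comul_right A (flip P))"
    and "mul3 A (comulop_left A (flip P)) (leg12 A (flip P)) =
      mul3 A (leg12 A (flip P)) (comul_left A (flip P))"
proof -
  show Q1: "comul_left A (flip P) = mul3 A (leg13 A (flip P)) (leg23 A (flip P))"
    using comul_left_flip_eq comul_right_inverse R2 RP PR by blast
  show Q2: "comul_right A (flip P) = mul3 A (leg13 A (flip P)) (leg12 A (flip P))"
    using comul_right_flip_eq comul_left_inverse R1 RP PR by blast
  have "yang_baxter A (flip P)"
    using R2 R3 RP PR comulop_right_iff_yang_baxter yang_baxter_inverse yang_baxter_flip by blast
  then show "mul3 A (comulop_right A (flip P)) (leg23 A (flip P)) =
      mul3 A (leg23 A (flip P)) (comul_right A (flip P))"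
    and "mul3 A (comulop_left A (flip P)) (leg12 A (flip P)) =
      mul3 A (leg12 A (flip P)) (comul_left A (flip P))"
    using Q1 Q2 comulop_right_iff_yang_baxter comulop_left_iff_yang_baxter by blast+
qed

subsection \<open>Conditions (5) and (6)\<close>

lemma mul2_zero_left [simp]: "mul2 A 0 X = 0"
  using pm_linear_zero[OF pm_linear_mul2_1[OF pm_linear_id]] by blast

lemma mul2_add_left: "mul2 A (X + Y) Z = mul2 A X Z + mul2 A Y Z"
  using pm_linear_addD[OF pm_linear_mul2_1[OF pm_linear_id]] by blast

lemma mul2_op_zero_left [simp]: "mul2_op A 0 X = 0"
  using pm_linear_zero[OF pm_linear_mul2_op1[OF pm_linear_id]] by blast

lemma mul2_op_add_left: "mul2_op A (X + Y) Z = mul2_op A X Z + mul2_op A Y Z"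
  using pm_linear_addD[OF pm_linear_mul2_op1[OF pm_linear_id]] by blast

lemma mul2_op_tens_central:
  "central A z \<Longrightarrow> mul2_op A (tens h z) X = mul2 A (tens h z) X"
  unfolding central_def
  by (rule pm_linear_eqI[of "mul2_op A (tens h z)" "mul2 A (tens h z)"])
     (intro pm_linear_intros | simp only: bvec_pair mul2_op_tens mul2_tens | simp)+

lemma mul2_op_H_tensor_center: "Z \<in> H_tensor_center A \<Longrightarrow> mul2_op A Z X = mul2 A Z X"
  by (induction rule: H_tensor_center.induct)
     (simp_all add: mul2_op_add_left mul2_add_left mul2_op_tens_central)

lemma mul2_op_mul2_tens_central:
  "central A z \<Longrightarrow> mul2_op A (mul2 A (tens h z) N) X = mul2 A (tens h z) (mul2_op A N X)"
  unfolding central_def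
  by (rule pm_bilinear_eqI[of "\<lambda>N X. mul2_op A (mul2 A (tens h z) N) X" "\<lambda>N X. mul2 A (tens h z) (mul2_op A N X)"])
     (intro pm_linear_intros | simp only: bvec_pair mul2_op_tens mul2_tens mul_assoc | simp add: mul_assoc[symmetric])+

lemma mul2_op_mul2_H_tensor_center:
  "Z \<in> H_tensor_center A \<Longrightarrow> mul2_op A (mul2 A Z N) X = mul2 A Z (mul2_op A N X)"
  by (induction rule: H_tensor_center.induct)
     (simp_all add: mul2_op_add_left mul2_add_left mul2_op_mul2_tens_central)

lemma nu_twist_tens:
  "nu_twist A h (tens u v) = lext (\<lambda>c. tens (mul A u (bvec (fst (snd c))))
     (mul A (mul A (antipode A (bvec (fst c))) v) (bvec (snd (snd c))))) (comul3 A h)"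
  (is "?L u v = ?R u v")
proof (rule pm_bilinear_eqI[of ?L ?R])
  show "pm_linear (\<lambda>u. ?L u v)" for v by (intro pm_linear_intros)
  show "pm_linear (\<lambda>v. ?L u v)" for u by (intro pm_linear_intros)
  show "pm_linear (\<lambda>u. ?R u v)" for v
    by (rule pm_linear_lext_fun[where F="\<lambda>c u. tens (mul A u (bvec (fst (snd c))))
      (mul A (mul A (antipode A (bvec (fst c))) v) (bvec (snd (snd c))))", OF _ pm_linear_id])
       (intro pm_linear_intros)
  show "pm_linear (\<lambda>v. ?R u v)" for u
    by (rule pm_linear_lext_fun[where F="\<lambda>c v. tens (mul A u (bvec (fst (snd c))))
      (mul A (mul A (antipode A (bvec (fst c))) v) (bvec (snd (snd c))))", OF _ pm_linear_id])
       (intro pm_linear_intros)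
  show "?L (bvec a) (bvec b) = ?R (bvec a) (bvec b)" for a b
    by (simp add: nu_twist_def case_prod_eta)
qed

lemma mul2_lext_left: "mul2 A (lext f v) Y = lext (\<lambda>a. mul2 A (f a) Y) v"
  using pm_linear_lext[OF pm_linear_mul2_1[OF pm_linear_id]] by blast

lemma mul2_op_lext_left: "mul2_op A (lext f v) Y = lext (\<lambda>a. mul2_op A (f a) Y) v"
  using pm_linear_lext[OF pm_linear_mul2_op1[OF pm_linear_id]] by blast

lemma nu_bilinear_eq:
  "nu_bilinear A h X Y = mul2 A (nu_twist A h (flip (antipode_left A X))) (flip Y)"
  (is "?L X Y = ?R X Y")
proof (rule pm_bilinear_eqI[of ?L ?R])
  show "pm_linear (\<lambda>x. ?L x Y)" for Y unfolding nu_bilinear_def by (intro pm_linear_intros)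
  show "pm_linear (\<lambda>x. ?L X x)" for X unfolding nu_bilinear_def by (intro pm_linear_intros)
  show "pm_linear (\<lambda>x. ?R x Y)" for Y by (intro pm_linear_intros)
  show "pm_linear (\<lambda>x. ?R X x)" for X by (intro pm_linear_intros)
  show "?L (bvec p) (bvec q) = ?R (bvec p) (bvec q)" for p q
    by (simp add: nu_bilinear_def antipode_left_def flip_bvec nu_twist_tens mul2_lext_left
        mul2_tens[of A _ _ "bvec _" "bvec _", simplified] case_prod_eta)
qed

lemma nu6_bilinear_eq: "nu6_bilinear A h X Y = mul2_op A (nu_twist A h X) (antipode_right A Y)"
  (is "?L X Y = ?R X Y")
proof (rule pm_bilinear_eqI[of ?L ?R])
  show "pm_linear (\<lambda>x. ?L x Y)" for Y unfolding nu6_bilinear_def by (intro pm_linear_intros)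
  show "pm_linear (\<lambda>x. ?L X x)" for X unfolding nu6_bilinear_def by (intro pm_linear_intros)
  show "pm_linear (\<lambda>x. ?R x Y)" for Y by (intro pm_linear_intros)
  show "pm_linear (\<lambda>x. ?R X x)" for X by (intro pm_linear_intros)
  show "?L (bvec p) (bvec q) = ?R (bvec p) (bvec q)" for p q
    by (simp add: nu6_bilinear_def antipode_right_def nu_twist_def mul2_op_lext_left mul2_op_tens
        case_prod_eta mul_assoc)
qed

lemma nu_eq: "nu A X h = mul2 A (nu_twist A h (flip (antipode_left A X))) (flip X)"
  using nu_bilinear_eq[of h X X] by (simp add: nu_def nu_bilinear_def bext_def case_prod_eta)

lemma nu6_eq: "nu6 A X h = mul2_op A (nu_twist A h X) (antipode_right A X)"
  using nu6_bilinear_eq[of h X X] by (simp add: nu6_def nu6_bilinear_def bext_def case_prod_eta)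

lemma nu_flip_inverse:
  assumes "nu A R h \<in> H_tensor_center A" "nu A R h = nu6 A R h"
    and "mul2_op A (antipode_right A R) R = one2 A"
    and "antipode_right A P = R" "mul2 A R P = one2 A"
  shows "nu A (flip P) h = nu A R h"
proof -
  let ?Z = "nu A R h"
  have "mul2 A ?Z R = mul2_op A ?Z R"
    using mul2_op_H_tensor_center[OF assms(1)] by simp
  also have "\<dots> = nu_twist A h R"
    using assms(2,3) by (simp add: nu6_eq mul2_op_assoc)
  finally have ZR: "mul2 A ?Z R = nu_twist A h R" .
  have "nu A (flip P) h = mul2 A (nu_twist A h R) P"
    using assms(4) by (simp add: nu_eq antipode_right_flip[of A "flip P", symmetric])
  also have "\<dots> = mul2 A ?Z (mul2 A R P)"
    by (simp only: ZR[symmetric] mul2_assoc)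
  finally show ?thesis using assms(5) by simp
qed

lemma nu6_flip_inverse:
  assumes "nu A R h \<in> H_tensor_center A"
    and "antipode_left A R = P" "mul2_op A (flip P) (antipode_right A (flip P)) = one2 A"
    and "mul2 A R P = one2 A"
  shows "nu6 A (flip P) h = nu A R h"
proof -
  let ?Z = "nu A R h"
  have "mul2 A ?Z (flip P) = nu_twist A h (flip P)"
    using assms(2,4) by (simp add: nu_eq mul2_assoc flip_mul2[symmetric])
  then have "nu6 A (flip P) h = mul2 A ?Z (mul2_op A (flip P) (antipode_right A (flip P)))"
    by (simp add: nu6_eq mul2_op_mul2_H_tensor_center[OF assms(1), symmetric])
  then show ?thesis using assms(3) by simp
qed

end

theorem proposition1p10:
  fixes A :: "('i, 'k::field) hopf_data"
    and R Rinv :: "'i \<times> 'i \<Rightarrow>\<^sub>0 'k"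
  assumes "hopf_algebra A"
    and "semiquasitriangular A R"
    and "mul2 A R Rinv = one2 A"
    and "mul2 A Rinv R = one2 A"
  shows "semiquasitriangular A (flip Rinv)"
proof -
  interpret hopf A by unfold_locales (fact assms(1))
  note RP = assms(3) and PR = assms(4)
  let ?Q = "flip Rinv"
  have QR: "mul2 A ?Q (flip R) = one2 A" and RQ: "mul2 A (flip R) ?Q = one2 A"
    using RP PR by (simp_all flip: flip_mul2)
  have R1: "comul_left A R = mul3 A (leg13 A R) (leg23 A R)"
    and R2: "comul_right A R = mul3 A (leg13 A R) (leg12 A R)"
    and R3: "mul3 A (comulop_right A R) (leg23 A R) = mul3 A (leg23 A R) (comul_right A R)"
    and R5: "\<And>h. nu A R h \<in> H_tensor_center A"
    and R6: "\<And>h. nu A R h = nu6 A R h"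
    using assms(2) unfolding semiquasitriangular_def by blast+
  note Q1234 = comul_conditions_flip_inverse[OF R1 R2 R3 RP PR]
  have "invertible2 A ?Q"
    using RP PR by (intro invertible2_flip) (auto simp: invertible2_def)
  moreover have "antipode_right A Rinv = R"
    using antipode_left_eq_inverse[OF Q1234(1) QR RQ] antipode_right_flip[of A ?Q] by simp
  then have "nu A ?Q h = nu A R h" for h
    using nu_flip_inverse R5 R6 mul2_op_antipode_right_self[OF R2 PR] RP by blast
  moreover have "nu6 A ?Q h = nu A R h" for h
    using nu6_flip_inverse R5 antipode_left_eq_inverse[OF R1 RP PR]
      mul2_op_self_antipode_right[OF Q1234(2) RQ] RP by blast
  ultimately show ?thesis
    unfolding semiquasitriangular_def using assms(1) Q1234 R5 by simp
qed

end
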